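(* Let $(G,H,\mathcal{L})$ be a cut-and-project scheme with injective $\star$-map. Let $W\subseteq H$ and let $\Gamma\subseteq G$ satisfy $\Lambda_{W^\circ}\subseteq\Gamma\subseteq\Lambda_{\overline{W}}$. Then there exists $W'\subseteq H$ with $\Gamma=\Lambda_{W'}$ such that $W'$ has each of the properties precompactness, non-empty interior, topological regularity and measure-theoretic regularity which $W$ has. If additionally $G$ is $\sigma$-compact and $W$ is precompact and (Borel) measurable, then $W'$ is precompact and measurable.
   Context: A cut-and-project scheme $(G,H,\mathcal{L})$ consists of locally compact abelian groups $G,H$ and a discrete cocompact subgroup $\mathcal{L}\subseteq G\times H$ such that $\pi^G|_{\mathcal{L}}$ is injective and $\pi^H(\mathcal{L})$ is dense in $H$. Let $L=\pi^G(\mathcal{L})$; the $\star$-map $L\to H$ is $x^\star=\pi^H((\pi^G|_{\mathcal{L}})^{-1}(x))$. For $W\subseteq H$, $\Lambda_W=\{x\in L: x^\star\in W\}$. Precompact: $\overline W$ compact; topologically regular: $\overline W=\overline{W^\circ}$; measure-theoretically regular: $\partial W=\overline W\setminus W^\circ$ has Haar measure zero. *)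

theory Defs
  imports "HOL-Analysis.Analysis"
begin

definition LCA_group :: "'a::{topological_ab_group_add, t2_space} itself \<Rightarrow> bool" where
  "LCA_group _ \<longleftrightarrow> locally_compact_space (euclidean :: 'a topology)"

text \<open>Cocompactness: (G \<times> H)/L is compact, expressed by the existence of a compact K with K + L = G \<times> H.\<close>
definition cut_and_project ::
  "('g::{topological_ab_group_add, t2_space} \<times> 'h::{topological_ab_group_add, t2_space}) set \<Rightarrow> bool" where
  "cut_and_project \<L> \<longleftrightarrow>
     LCA_group TYPE('g) \<and> LCA_group TYPE('h) \<and>
     (0, 0) \<in> \<L> \<and>
     (\<forall>a\<in>\<L>. \<forall>b\<in>\<L>. (fst a + fst b, snd a + snd b) \<in> \<L>) \<and>
     (\<forall>a\<in>\<L>. (- fst a, - snd a) \<in> \<L>) \<and>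
     (\<forall>z\<in>\<L>. \<exists>U. open U \<and> U \<inter> \<L> = {z}) \<and>
     (\<exists>K. compact K \<and> (\<forall>z. \<exists>k\<in>K. \<exists>l\<in>\<L>. z = (fst k + fst l, snd k + snd l))) \<and>
     inj_on fst \<L> \<and>
     closure (snd ` \<L>) = UNIV"

definition star_map :: "('g \<times> 'h) set \<Rightarrow> 'g \<Rightarrow> 'h" where
  "star_map \<L> x = snd (THE z. z \<in> \<L> \<and> fst z = x)"

definition model_set :: "('g \<times> 'h) set \<Rightarrow> 'h set \<Rightarrow> 'g set" where
  "model_set \<L> W = {x \<in> fst ` \<L>. star_map \<L> x \<in> W}"

definition precompact :: "'a::topological_space set \<Rightarrow> bool" where
  "precompact W \<longleftrightarrow> compact (closure W)"

definition top_regular :: "'a::topological_space set \<Rightarrow> bool" where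
  "top_regular W \<longleftrightarrow> closure W = closure (interior W)"

definition haar_measure :: "'a::{topological_ab_group_add, t2_space} measure \<Rightarrow> bool" where
  "haar_measure \<mu> \<longleftrightarrow>
     sets \<mu> = sets borel \<and> space \<mu> = UNIV \<and>
     (\<forall>A\<in>sets borel. \<forall>x. emeasure \<mu> ((\<lambda>y. x + y) ` A) = emeasure \<mu> A) \<and>
     (\<forall>K. compact K \<longrightarrow> emeasure \<mu> K < \<infinity>) \<and>
     (\<forall>U. open U \<and> U \<noteq> {} \<longrightarrow> emeasure \<mu> U > 0) \<and>
     (\<forall>A\<in>sets borel. emeasure \<mu> A = (INF U\<in>{U. open U \<and> A \<subseteq> U}. emeasure \<mu> U)) \<and>
     (\<forall>U. open U \<longrightarrow> emeasure \<mu> U = (SUP K\<in>{K. compact K \<and> K \<subseteq> U}. emeasure \<mu> K))"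

definition measure_regular :: "'a measure \<Rightarrow> 'a::topological_space set \<Rightarrow> bool" where
  "measure_regular \<mu> W \<longleftrightarrow> emeasure \<mu> (frontier W) = 0"

definition sigma_compact_space :: "'a::topological_space itself \<Rightarrow> bool" where
  "sigma_compact_space _ \<longleftrightarrow> (\<exists>K :: nat \<Rightarrow> 'a set. (\<forall>n. compact (K n)) \<and> (\<Union>n. K n) = UNIV)"

end

(*
  Take W' = interior W \<union> \<Gamma>\<^sup>\<star>. As \<Gamma> lies in L and the star map is injective, the
  model set of W' is exactly \<Gamma>. Since interior W \<subseteq> W' \<subseteq> closure W, the closure of W'
  lies in that of W, its interior contains that of W and its frontier lies in that of W,
  which transfers all four properties. For measurability, \<Gamma>\<^sup>\<star> is countable: if G is
  the union of compacts K n, then \<Gamma>\<^sup>\<star> is the projection of lattice points in the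
  compact sets K n \<times> closure W, and a discrete subgroup meets every compact set in
  finitely many points.
*)
theory Submission
  imports Defs
begin

instance prod :: (topological_monoid_add, topological_monoid_add) topological_monoid_add
proof
  fix a b :: "'a \<times> 'b"
  have "((\<lambda>x. fst (fst x) + fst (snd x)) \<longlongrightarrow> fst a + fst b) (nhds a \<times>\<^sub>F nhds b)"
    "((\<lambda>x. snd (fst x) + snd (snd x)) \<longlongrightarrow> snd a + snd b) (nhds a \<times>\<^sub>F nhds b)"
    by (intro tendsto_intros filterlim_fst filterlim_snd)+
  then show "((\<lambda>x. fst x + snd x) \<longlongrightarrow> a + b) (nhds a \<times>\<^sub>F nhds b)"
    unfolding plus_prod_def by (auto intro!: tendsto_Pair)
qed

instance prod :: (topological_group_add, topological_group_add) topological_group_add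
proof
  fix a :: "'a \<times> 'b"
  have "((\<lambda>x. - fst x) \<longlongrightarrow> - fst a) (nhds a)" "((\<lambda>x. - snd x) \<longlongrightarrow> - snd a) (nhds a)"
    by (intro tendsto_intros filterlim_ident)+
  then show "(uminus \<longlongrightarrow> - a) (nhds a)"
    unfolding uminus_prod_def by (auto intro!: tendsto_Pair)
qed

lemma discrete_subgroup_Int_compact_finite:
  fixes \<Lambda> :: "'a::topological_group_add set"
  assumes diff: "\<And>a b. a \<in> \<Lambda> \<Longrightarrow> b \<in> \<Lambda> \<Longrightarrow> a - b \<in> \<Lambda>"
    and U: "open U" "U \<inter> \<Lambda> = {0}"
    and K: "compact K"
  shows "finite (\<Lambda> \<inter> K)"
proof -
  \<comment> \<open>Every point has a neighbourhood N with N - N \<subseteq> U, which therefore contains at most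
    one point of \<Lambda>.\<close>
  have "\<forall>p. \<exists>N. open N \<and> p \<in> N \<and> (\<forall>x\<in>N. \<forall>y\<in>N. x - y \<in> U)"
  proof
    fix p :: 'a
    have "open ((\<lambda>z. fst z - snd z) -` U)"
      using \<open>open U\<close> by (intro open_vimage continuous_intros)
    moreover have "(p, p) \<in> (\<lambda>z. fst z - snd z) -` U"
      using U by auto
    ultimately obtain A B where AB: "open A" "open B" "(p, p) \<in> A \<times> B"
        "A \<times> B \<subseteq> (\<lambda>z. fst z - snd z) -` U"
      by (rule open_prod_elim)
    have "x - y \<in> U" if "x \<in> A \<inter> B" "y \<in> A \<inter> B" for x y
      using AB(4) that by (auto simp: subset_eq)
    then show "\<exists>N. open N \<and> p \<in> N \<and> (\<forall>x\<in>N. \<forall>y\<in>N. x - y \<in> U)"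
      using AB(1-3) by (intro exI[of _ "A \<inter> B"]) auto
  qed
  then obtain N where N: "\<forall>p. open (N p) \<and> p \<in> N p \<and> (\<forall>x\<in>N p. \<forall>y\<in>N p. x - y \<in> U)"
    by (rule choice[THEN exE])
  obtain F where "finite F" "K \<subseteq> (\<Union>p\<in>F. N p)"
  proof (rule compactE_image[OF K, of K N])
    show "open (N p)" for p
      using N by blast
    show "K \<subseteq> (\<Union>p\<in>K. N p)"
      using N by blast
  qed (blast intro: that)
  have "\<Lambda> \<inter> N p \<subseteq> {a}" if "a \<in> \<Lambda> \<inter> N p" for a p
  proof
    fix b assume "b \<in> \<Lambda> \<inter> N p"
    then have "b - a \<in> U \<inter> \<Lambda>"
      using that N diff[of b a] by auto
    then show "b \<in> {a}"
      using U(2) by auto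
  qed
  then have "finite (\<Lambda> \<inter> N p)" for p
    by (metis ex_in_conv finite.emptyI finite_subset finite_insert)
  then have "finite (\<Union>p\<in>F. \<Lambda> \<inter> N p)"
    using \<open>finite F\<close> by blast
  then show ?thesis
    by (rule finite_subset[rotated]) (use \<open>K \<subseteq> (\<Union>p\<in>F. N p)\<close> in blast)
qed

lemma countable_discrete_subgroup_Int_UN_compact:
  fixes \<Lambda> :: "'a::topological_group_add set" and K :: "nat \<Rightarrow> 'a set"
  assumes "\<And>a b. a \<in> \<Lambda> \<Longrightarrow> b \<in> \<Lambda> \<Longrightarrow> a - b \<in> \<Lambda>"
    and "open U" "U \<inter> \<Lambda> = {0}"
    and "\<And>n. compact (K n)"
  shows "countable (\<Lambda> \<inter> (\<Union>n. K n))"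
  unfolding Int_UN_distrib
  using discrete_subgroup_Int_compact_finite[OF assms(1-3)] assms(4)
  by (intro countable_UN) (auto intro: countable_finite)

lemma precompact_subset_closure:
  assumes "precompact W" "V \<subseteq> closure W"
  shows "precompact V"
proof -
  have "closure V \<subseteq> closure W"
    using assms(2) by (simp add: closure_minimal)
  then have "closure V = closure W \<inter> closure V"
    by blast
  then show ?thesis
    using assms(1) unfolding precompact_def by (metis closed_closure compact_Int_closed)
qed

lemma top_regular_between_interior_closure:
  assumes "top_regular W" "interior W \<subseteq> V" "V \<subseteq> closure W"
  shows "top_regular V"
proof -
  have "closure V \<subseteq> closure (interior W)"
    using assms(1,3) unfolding top_regular_def by (simp add: closure_minimal)
  also have "\<dots> \<subseteq> closure (interior V)"
    using assms(2) by (intro closure_mono interior_maximal) auto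
  finally show ?thesis
    unfolding top_regular_def by (meson closure_mono interior_subset subset_antisym)
qed

lemma frontier_subset_between_interior_closure:
  assumes "interior W \<subseteq> V" "V \<subseteq> closure W"
  shows "frontier V \<subseteq> frontier W"
proof -
  have "closure V \<subseteq> closure W" "interior W \<subseteq> interior V"
    using assms by (simp_all add: closure_minimal interior_maximal)
  then show ?thesis
    unfolding frontier_def by blast
qed

lemma measure_regular_between_interior_closure:
  assumes "sets \<mu> = sets borel" "measure_regular \<mu> W" "interior W \<subseteq> V" "V \<subseteq> closure W"
  shows "measure_regular \<mu> V"
proof -
  have "emeasure \<mu> (frontier V) \<le> emeasure \<mu> (frontier W)"
    using assms(1) frontier_subset_between_interior_closure[OF assms(3,4)]
    by (intro emeasure_mono) auto
  then show ?thesis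
    using assms(2) unfolding measure_regular_def by simp
qed

lemma cut_and_project_diff:
  assumes "cut_and_project \<L>" "a \<in> \<L>" "b \<in> \<L>"
  shows "a - b \<in> \<L>"
proof -
  have add: "\<And>a b. a \<in> \<L> \<Longrightarrow> b \<in> \<L> \<Longrightarrow> (fst a + fst b, snd a + snd b) \<in> \<L>"
    and neg: "\<And>a. a \<in> \<L> \<Longrightarrow> (- fst a, - snd a) \<in> \<L>"
    using assms(1) unfolding cut_and_project_def by blast+
  show ?thesis
    using add[OF assms(2) neg[OF assms(3)]] by (simp add: minus_prod_def)
qed

lemma cut_and_project_isolated_zero:
  assumes "cut_and_project \<L>"
  obtains U where "open U" "U \<inter> \<L> = {0}"
proof -
  have "(0, 0) \<in> \<L>" "\<And>z. z \<in> \<L> \<Longrightarrow> \<exists>U. open U \<and> U \<inter> \<L> = {z}"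
    using assms unfolding cut_and_project_def by blast+
  then show ?thesis
    using that unfolding zero_prod_def by blast
qed

lemma cut_and_project_inj_fst:
  assumes "cut_and_project \<L>"
  shows "inj_on fst \<L>"
  using assms unfolding cut_and_project_def by blast

lemma star_map_fst:
  assumes "inj_on fst \<L>" "z \<in> \<L>"
  shows "star_map \<L> (fst z) = snd z"
proof -
  have "(THE z'. z' \<in> \<L> \<and> fst z' = fst z) = z"
    using assms by (intro the_equality) (auto dest: inj_onD)
  then show ?thesis
    unfolding star_map_def by simp
qed

lemma model_set_Un_star_image:
  assumes inj_fst: "inj_on fst \<L>" and inj_snd: "inj_on snd \<L>"
    and lower: "model_set \<L> A \<subseteq> \<Gamma>" and "\<Gamma> \<subseteq> fst ` \<L>"
  shows "model_set \<L> (A \<union> star_map \<L> ` \<Gamma>) = \<Gamma>"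
proof
  show "\<Gamma> \<subseteq> model_set \<L> (A \<union> star_map \<L> ` \<Gamma>)"
    using \<open>\<Gamma> \<subseteq> fst ` \<L>\<close> unfolding model_set_def by blast
next
  show "model_set \<L> (A \<union> star_map \<L> ` \<Gamma>) \<subseteq> \<Gamma>"
  proof
    fix x assume x: "x \<in> model_set \<L> (A \<union> star_map \<L> ` \<Gamma>)"
    then obtain z where z: "z \<in> \<L>" "x = fst z"
      unfolding model_set_def by blast
    consider "star_map \<L> x \<in> A" | y where "y \<in> \<Gamma>" "star_map \<L> x = star_map \<L> y"
      using x unfolding model_set_def by blast
    then show "x \<in> \<Gamma>"
    proof cases
      case 1
      then show ?thesis
        using lower z unfolding model_set_def by blast
    next
      case (2 y)
      then obtain z' where z': "z' \<in> \<L>" "y = fst z'"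
        using \<open>\<Gamma> \<subseteq> fst ` \<L>\<close> by blast
      then have "snd z = snd z'"
        using 2(2) z star_map_fst[OF inj_fst] by simp
      then show ?thesis
        using inj_onD[OF inj_snd _ z(1) z'(1)] 2(1) z z' by simp
    qed
  qed
qed

lemma countable_star_image_model_set:
  fixes \<L> :: "('g::{topological_ab_group_add, t2_space} \<times> 'h::{topological_ab_group_add, t2_space}) set"
  assumes cps: "cut_and_project \<L>" and "sigma_compact_space TYPE('g)" and "compact C"
  shows "countable (star_map \<L> ` model_set \<L> C)"
proof -
  obtain K :: "nat \<Rightarrow> 'g set" where K: "\<And>n. compact (K n)" "(\<Union>n. K n) = UNIV"
    using assms(2) unfolding sigma_compact_space_def by blast
  obtain U where "open U" "U \<inter> \<L> = {0}"
    using cps by (rule cut_and_project_isolated_zero)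
  then have "countable (\<L> \<inter> (\<Union>n. K n \<times> C))"
    using cut_and_project_diff[OF cps] K(1) \<open>compact C\<close>
    by (intro countable_discrete_subgroup_Int_UN_compact compact_Times)
  moreover have "star_map \<L> ` model_set \<L> C \<subseteq> snd ` (\<L> \<inter> (\<Union>n. K n \<times> C))"
  proof
    fix y assume "y \<in> star_map \<L> ` model_set \<L> C"
    then obtain z where z: "z \<in> \<L>" "star_map \<L> (fst z) \<in> C" "y = star_map \<L> (fst z)"
      unfolding model_set_def by blast
    then have "snd z \<in> C" "y = snd z"
      using star_map_fst[OF cut_and_project_inj_fst[OF cps] z(1)] by simp_all
    moreover obtain n where "fst z \<in> K n"
      using K(2) by blast
    ultimately show "y \<in> snd ` (\<L> \<inter> (\<Union>n. K n \<times> C))"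
      using z(1) by (intro image_eqI[of _ _ z]) (auto simp: mem_Times_iff)
  qed
  ultimately show ?thesis
    by (metis countable_image countable_subset)
qed

theorem proposition2p4:
  fixes \<L> :: "('g::{topological_ab_group_add, t2_space} \<times> 'h::{topological_ab_group_add, t2_space}) set"
    and \<mu> :: "'h measure"
    and W :: "'h set" and \<Gamma> :: "'g set"
  assumes cps: "cut_and_project \<L>"
    and inj_star: "inj_on snd \<L>"
    and haar: "haar_measure \<mu>"
    and lower: "model_set \<L> (interior W) \<subseteq> \<Gamma>"
    and upper: "\<Gamma> \<subseteq> model_set \<L> (closure W)"
  shows "\<exists>W'. \<Gamma> = model_set \<L> W' \<and>
           (precompact W \<longrightarrow> precompact W') \<and>
           (interior W \<noteq> {} \<longrightarrow> interior W' \<noteq> {}) \<and>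
           (top_regular W \<longrightarrow> top_regular W') \<and>
           (measure_regular \<mu> W \<longrightarrow> measure_regular \<mu> W') \<and>
           (sigma_compact_space TYPE('g) \<and> precompact W \<and> W \<in> sets borel \<longrightarrow>
              precompact W' \<and> W' \<in> sets borel)"
proof -
  define W' where "W' = interior W \<union> star_map \<L> ` \<Gamma>"
  have "\<Gamma> \<subseteq> fst ` \<L>" and star_closure: "star_map \<L> ` \<Gamma> \<subseteq> closure W"
    using upper unfolding model_set_def by blast+
  then have "model_set \<L> W' = \<Gamma>"
    unfolding W'_def
    by (intro model_set_Un_star_image cut_and_project_inj_fst[OF cps] inj_star lower)
  moreover have inner: "interior W \<subseteq> W'"
    unfolding W'_def by blast
  moreover have outer: "W' \<subseteq> closure W"
    unfolding W'_def using star_closure interior_subset closure_subset by blast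
  moreover have "interior W \<subseteq> interior W'"
    using inner by (rule interior_maximal) simp
  moreover have "W' \<in> sets borel"
    if "sigma_compact_space TYPE('g)" "precompact W"
  proof -
    have "countable (star_map \<L> ` model_set \<L> (closure W))"
      using cps that unfolding precompact_def by (rule countable_star_image_model_set)
    then have "countable (star_map \<L> ` \<Gamma>)"
      using upper by (meson countable_subset image_mono)
    then have "star_map \<L> ` \<Gamma> \<in> sets borel"
      by (rule sets.countable[rotated]) simp
    then show ?thesis
      unfolding W'_def by simp
  qed
  moreover have "sets \<mu> = sets borel"
    using haar unfolding haar_measure_def by (rule conjunct1)
  ultimately show ?thesis
    using precompact_subset_closure top_regular_between_interior_closure
      measure_regular_between_interior_closure
    by (intro exI[of _ W']) auto
qed

end
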